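(* Let $n\ge1$ and $N\ge n$. (i) For every integer $c$ with $0\le c\le\lfloor n/2\rfloor$, the dimension of the space of $S_n$-invariant homogeneous polynomials of degree $c$ on $\mathbb R^{n\times n}$ equals the dimension of the space of $S_N$-invariant homogeneous polynomials of degree $c$ on $\mathbb R^{N\times N}$. (ii) For every integer $c$ with $0\le c\le\lfloor n/2\rfloor-1$, the dimension of the space of $S_n$-equivariant polynomial maps $\mathbb R^{n\times n}\to\mathbb R^{n\times n}$ with homogeneous components of degree $c$ equals the corresponding dimension for $S_N$ acting on $\mathbb R^{N\times N}$.
   Context: $S_n$ acts on $\mathbb R^{n\times n}$ by $(g\cdot X)_{ij}=X_{g^{-1}(i),g^{-1}(j)}$. A polynomial $p$ is invariant if $p(g\cdot X)=p(X)$ for all $g$; a polynomial map $P$ is equivariant if $P(g\cdot X)=g\cdot P(X)$ for all $g$. *)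

theory Defs
  imports "HOL-Combinatorics.Permutations" "HOL-Analysis.Analysis" "HOL-Library.Function_Algebras"
begin

text \<open>Real n x n matrices are represented as functions nat => nat => real; only the
entries with indices < n are relevant. Polynomials on R^(n x n) are identified with
polynomial functions (R is infinite), i.e. elements of the real span of monomial functions.\<close>

type_synonym mat = "nat \<Rightarrow> nat \<Rightarrow> real"

definition fscale :: "real \<Rightarrow> ('a \<Rightarrow> real) \<Rightarrow> ('a \<Rightarrow> real)" where
  "fscale r f = (\<lambda>x. r * f x)"

definition mscale :: "real \<Rightarrow> ('a \<Rightarrow> mat) \<Rightarrow> ('a \<Rightarrow> mat)" where
  "mscale r F = (\<lambda>x i j. r * F x i j)"

definition exps :: "nat \<Rightarrow> nat \<Rightarrow> (nat \<times> nat \<Rightarrow> nat) set" where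
  "exps n c = {\<alpha>. (\<forall>p. p \<notin> {..<n} \<times> {..<n} \<longrightarrow> \<alpha> p = 0)
                  \<and> (\<Sum>p\<in>{..<n} \<times> {..<n}. \<alpha> p) = c}"

definition monomial_fn :: "nat \<Rightarrow> (nat \<times> nat \<Rightarrow> nat) \<Rightarrow> mat \<Rightarrow> real" where
  "monomial_fn n \<alpha> X = (\<Prod>(i,j)\<in>{..<n} \<times> {..<n}. X i j ^ \<alpha> (i,j))"

definition hom_poly :: "nat \<Rightarrow> nat \<Rightarrow> (mat \<Rightarrow> real) set" where
  "hom_poly n c = module.span fscale (monomial_fn n ` exps n c)"

definition act :: "(nat \<Rightarrow> nat) \<Rightarrow> mat \<Rightarrow> mat" where
  "act g X = (\<lambda>i j. X (inv g i) (inv g j))"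

definition invariant :: "nat \<Rightarrow> (mat \<Rightarrow> real) \<Rightarrow> bool" where
  "invariant n p \<longleftrightarrow> (\<forall>g X. g permutes {..<n} \<longrightarrow> p (act g X) = p X)"

definition equivariant :: "nat \<Rightarrow> (mat \<Rightarrow> mat) \<Rightarrow> bool" where
  "equivariant n P \<longleftrightarrow> (\<forall>g X. g permutes {..<n} \<longrightarrow> P (act g X) = act g (P X))"

definition hom_poly_map :: "nat \<Rightarrow> nat \<Rightarrow> (mat \<Rightarrow> mat) set" where
  "hom_poly_map n c = {P. (\<forall>i<n. \<forall>j<n. (\<lambda>X. P X i j) \<in> hom_poly n c)
      \<and> (\<forall>X i j. \<not> (i < n \<and> j < n) \<longrightarrow> P X i j = 0)}"

definition inv_dim :: "nat \<Rightarrow> nat \<Rightarrow> nat" where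
  "inv_dim n c = vector_space.dim fscale {p \<in> hom_poly n c. invariant n p}"

definition equiv_dim :: "nat \<Rightarrow> nat \<Rightarrow> nat" where
  "equiv_dim n c = vector_space.dim mscale {P \<in> hom_poly_map n c. equivariant n P}"

end

theory Submission
  imports Defs
begin

(*
  A monomial of degree c in the entries of X involves at most 2c row/column indices, so Moebius
  inversion over index sets expresses a homogeneous polynomial f of degree c on N x N matrices
  through its values on principal submatrices with at most 2c indices:
    f X = (SUM |T| <= 2c. SUM U <= T. (-1)^|T - U| * f (X restricted to U)).
  If f is S_N-invariant, f (X restricted to U) does not change when U is relabelled into
  {0..n-1}, and any two such relabellings differ on U by an element of S_n. So for 2c <= n the
  formula, with relabelled terms, extends every S_n-invariant polynomial on n x n matrices to an
  S_N-invariant one, and this extension is inverse to restriction to the top-left n x n block.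
  For equivariant maps the entry (i, j) is handled in the same way on the index sets
  U \<union> {i, j}, which costs two more indices: 2c + 2 <= n.
*)

interpretation fs: vector_space "fscale :: real \<Rightarrow> ('a \<Rightarrow> real) \<Rightarrow> _"
  by unfold_locales (auto simp: fscale_def fun_eq_iff algebra_simps)

interpretation ms: vector_space "mscale :: real \<Rightarrow> ('a \<Rightarrow> mat) \<Rightarrow> _"
  by unfold_locales (auto simp: mscale_def fun_eq_iff algebra_simps)

lemma (in Vector_Spaces.linear) dim_eq_if_inverse_on:
  assumes A: "vs1.subspace A"
    and maps: "f ` A \<subseteq> B" "g ` B \<subseteq> A"
    and inverse: "\<And>x. x \<in> A \<Longrightarrow> g (f x) = x" "\<And>y. y \<in> B \<Longrightarrow> f (g y) = y"
  shows "vs2.dim B = vs1.dim A"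
proof -
  obtain C where C: "C \<subseteq> A" "vs1.independent C" "A \<subseteq> vs1.span C" "card C = vs1.dim A"
    using vs1.basis_exists by blast
  have span_C: "vs1.span C = A"
    using C(1,3) vs1.span_minimal[OF C(1) A] by blast
  have inj: "inj_on f A"
    by (rule inj_on_inverseI[of _ g]) (rule inverse(1))
  have image: "f ` A = B"
  proof
    show "B \<subseteq> f ` A"
    proof
      fix y assume "y \<in> B"
      then show "y \<in> f ` A"
        using inverse(2) maps(2) by (metis image_subset_iff rev_image_eqI)
    qed
  qed (rule maps(1))
  show ?thesis
  proof (rule vs2.dim_unique)
    show "f ` C \<subseteq> B" "B \<subseteq> vs2.span (f ` C)"
      using C(1) image span_C span_image by auto
    show "vs2.independent (f ` C)"
      using C(2) dependent_inj_imageD inj span_C by metis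
    show "card (f ` C) = vs1.dim A"
      using C(1,4) card_image inj inj_on_subset by metis
  qed
qed

lemma permutes_extend_inj_on:
  assumes "finite S" "V \<subseteq> S" "inj_on f V" "f ` V \<subseteq> S"
  obtains g where "g permutes S" "\<And>x. x \<in> V \<Longrightarrow> g x = f x"
proof -
  have fin: "finite V"
    using assms(1,2) finite_subset by blast
  have "card (S - V) = card (S - f ` V)"
    using card_Diff_subset[OF fin assms(2)] card_Diff_subset[OF finite_imageI[OF fin] assms(4)]
      card_image[OF assms(3)] by simp
  then obtain k where k: "bij_betw k (S - V) (S - f ` V)"
    using finite_same_card_bij[OF finite_Diff[OF assms(1)] finite_Diff[OF assms(1)]] by blast
  define g where "g x = (if x \<in> V then f x else if x \<in> S then k x else x)" for x
  have "bij_betw g V (f ` V)"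
    using bij_betw_cong[of V g f] inj_on_imp_bij_betw[OF assms(3)] by (simp add: g_def)
  moreover have "bij_betw g (S - V) (S - f ` V)"
    using bij_betw_cong[of "S - V" g k] k by (simp add: g_def)
  ultimately have "bij_betw g (V \<union> (S - V)) (f ` V \<union> (S - f ` V))"
    by (rule bij_betw_combine) blast
  then have "bij_betw g S S"
    using assms(2,4) by (simp add: Un_absorb1)
  then have "g permutes S"
    by (rule bij_imp_permutes) (use assms(2) in \<open>auto simp: g_def\<close>)
  then show thesis
    using that by (simp add: g_def)
qed

lemma permutes_transfer_on:
  assumes "finite S" "inj_on h1 W" "inj_on h2 W" "h1 ` W \<subseteq> S" "h2 ` W \<subseteq> S"
  obtains g where "g permutes S" "\<And>w. w \<in> W \<Longrightarrow> g (h1 w) = h2 w"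
proof -
  have "inj_on (h2 \<circ> inv_into W h1) (h1 ` W)"
    using assms(2,3) by (auto simp: inj_on_def)
  moreover have "(h2 \<circ> inv_into W h1) ` h1 ` W \<subseteq> S"
    using assms(2,5) by (auto simp: image_comp)
  ultimately obtain g where "g permutes S" "\<And>x. x \<in> h1 ` W \<Longrightarrow> g x = (h2 \<circ> inv_into W h1) x"
    using permutes_extend_inj_on[OF assms(1,4)] by blast
  then show thesis
    using that assms(2) by simp
qed

lemma exists_permutes_into:
  assumes "W \<subseteq> {..<N}" "card W \<le> n" "n \<le> N"
  shows "\<exists>h. h permutes {..<N} \<and> h ` W \<subseteq> {..<n}"
proof -
  obtain f where f: "f ` W \<subseteq> {..<n}" "inj_on f W"
    using card_le_inj[of W "{..<n}"] assms finite_subset by auto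
  moreover have "f ` W \<subseteq> {..<N}"
    using f(1) assms(3) by auto
  ultimately obtain h where "h permutes {..<N}" "\<And>x. x \<in> W \<Longrightarrow> h x = f x"
    using permutes_extend_inj_on[OF finite_lessThan assms(1)] by metis
  then show ?thesis
    using f(1) by (metis image_cong)
qed

lemma permutes_lessThan_mono:
  fixes n N :: nat
  assumes "g permutes {..<n}" "n \<le> N"
  shows "g permutes {..<N}"
  using assms(1) by (rule permutes_subset) (use assms(2) in auto)

lemma inv_permutes_lessThan_iff: "g permutes {..<n} \<Longrightarrow> inv g i < n \<longleftrightarrow> i < n"
  using permutes_in_image[OF permutes_inv, of g "{..<n}" i] by simp

definition mat_restrict :: "nat set \<Rightarrow> mat \<Rightarrow> mat" where
  "mat_restrict W X = (\<lambda>i j. if i \<in> W \<and> j \<in> W then X i j else 0)"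

lemma mat_restrict_mat_restrict: "mat_restrict A (mat_restrict B X) = mat_restrict (A \<inter> B) X"
  by (auto simp: mat_restrict_def fun_eq_iff)

lemma act_id: "act id X = X"
  by (simp add: act_def)

lemma act_act: "bij g \<Longrightarrow> bij h \<Longrightarrow> act g (act h X) = act (g \<circ> h) X"
  by (simp add: act_def o_inv_distrib bij_is_inj)

lemma mat_restrict_act: "bij g \<Longrightarrow> mat_restrict W (act g X) = act g (mat_restrict (inv g ` W) X)"
  by (auto simp: act_def mat_restrict_def fun_eq_iff bij_is_inj inj_image_mem_iff bij_imp_bij_inv)

lemma mat_restrict_act_mat_restrict:
  assumes "bij h" "h ` W \<subseteq> A"
  shows "mat_restrict A (act h (mat_restrict W X)) = act h (mat_restrict W X)"
proof -
  have "inv h i \<in> W \<Longrightarrow> i \<in> A" for i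
    using assms by (metis bij_inv_eq_iff image_subset_iff)
  then show ?thesis
    by (auto simp: act_def mat_restrict_def fun_eq_iff)
qed

lemma act_mat_restrict_cong:
  assumes "bij f" "bij g" "\<And>x. x \<in> W \<Longrightarrow> f x = g x"
  shows "act f (mat_restrict W X) = act g (mat_restrict W X)"
proof -
  have inv_eq: "inv g' i = inv f' i"
    if "bij f'" "bij g'" "\<And>x. x \<in> W \<Longrightarrow> f' x = g' x" "inv f' i \<in> W"
    for f' g' :: "nat \<Rightarrow> nat" and i
    using that by (metis bij_inv_eq_iff)
  show ?thesis
    using inv_eq[OF assms] inv_eq[OF assms(2,1)] assms(3)
    unfolding act_def mat_restrict_def fun_eq_iff by metis
qed

lemma mat_restrict_lessThan_act:
  assumes "g permutes {..<n}"
  shows "mat_restrict {..<n} (act g X) = act g (mat_restrict {..<n} X)"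
  using mat_restrict_act[OF permutes_bij[OF assms]] permutes_image[OF permutes_inv[OF assms]] by simp

lemma act_mat_restrict_transfer:
  assumes "bij h1" "bij h2" "h1 ` W \<subseteq> {..<n}" "h2 ` W \<subseteq> {..<n}"
  obtains g where "g permutes {..<n}" "\<And>w. w \<in> W \<Longrightarrow> g (h1 w) = h2 w"
    "\<And>X. act h2 (mat_restrict W X) = act g (act h1 (mat_restrict W X))"
proof -
  have "inj_on h1 W" "inj_on h2 W"
    using assms(1,2) bij_is_inj inj_on_subset[OF _ subset_UNIV] by blast+
  then obtain g where g: "g permutes {..<n}" "\<And>w. w \<in> W \<Longrightarrow> g (h1 w) = h2 w"
    using permutes_transfer_on[OF finite_lessThan _ _ assms(3,4)] by blast
  have bij_g: "bij g"
    using permutes_bij[OF g(1)] .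
  have "act h2 (mat_restrict W X) = act (g \<circ> h1) (mat_restrict W X)" for X
    by (rule act_mat_restrict_cong) (use assms(1,2) bij_g g(2) in \<open>auto intro: bij_comp\<close>)
  then show thesis
    using that g act_act[OF bij_g assms(1)] by simp
qed

lemma invariant_act_mat_restrict_transfer:
  assumes "invariant n p" "bij h1" "bij h2" "h1 ` W \<subseteq> {..<n}" "h2 ` W \<subseteq> {..<n}"
  shows "p (act h1 (mat_restrict W X)) = p (act h2 (mat_restrict W X))"
  using act_mat_restrict_transfer[OF assms(2-5)] assms(1) unfolding invariant_def by metis

lemma equivariant_act_mat_restrict_transfer:
  assumes "equivariant n Q" "bij h1" "bij h2" "h1 ` W \<subseteq> {..<n}" "h2 ` W \<subseteq> {..<n}"
    and "i \<in> W" "j \<in> W"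
  shows "Q (act h1 (mat_restrict W X)) (h1 i) (h1 j) = Q (act h2 (mat_restrict W X)) (h2 i) (h2 j)"
proof -
  obtain g where g: "g permutes {..<n}" "\<And>w. w \<in> W \<Longrightarrow> g (h1 w) = h2 w"
    "act h2 (mat_restrict W X) = act g (act h1 (mat_restrict W X))"
    using act_mat_restrict_transfer[OF assms(2-5)] by metis
  have "Q (act h2 (mat_restrict W X)) (h2 i) (h2 j)
      = act g (Q (act h1 (mat_restrict W X))) (g (h1 i)) (g (h1 j))"
    using assms(1,6,7) g unfolding equivariant_def by metis
  also have "\<dots> = Q (act h1 (mat_restrict W X)) (h1 i) (h1 j)"
    by (simp add: act_def permutes_inverses(2)[OF g(1)])
  finally show ?thesis
    by simp
qed

definition exp_indices :: "(nat \<times> nat \<Rightarrow> nat) \<Rightarrow> nat set" where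
  "exp_indices \<alpha> = fst ` {p. \<alpha> p \<noteq> 0} \<union> snd ` {p. \<alpha> p \<noteq> 0}"

lemma exp_indices_subset_iff: "exp_indices \<alpha> \<subseteq> W \<longleftrightarrow> (\<forall>p. \<alpha> p \<noteq> 0 \<longrightarrow> p \<in> W \<times> W)"
  by (auto simp: exp_indices_def mem_Times_iff)

lemma exps_vanish: "\<alpha> \<in> exps N c \<Longrightarrow> \<alpha> p \<noteq> 0 \<Longrightarrow> p \<in> {..<N} \<times> {..<N}"
  unfolding exps_def mem_Collect_eq by metis

lemma exp_indices_exps: "\<alpha> \<in> exps N c \<Longrightarrow> exp_indices \<alpha> \<subseteq> {..<N}"
  using exps_vanish exp_indices_subset_iff by blast

lemma card_exp_indices_exps:
  assumes "\<alpha> \<in> exps N c"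
  shows "card (exp_indices \<alpha>) \<le> 2 * c"
proof -
  let ?S = "{p. \<alpha> p \<noteq> 0}"
  have sub: "?S \<subseteq> {..<N} \<times> {..<N}"
    using exps_vanish[OF assms] by blast
  have "card ?S \<le> (\<Sum>p\<in>?S. \<alpha> p)"
    using card_eq_sum sum_mono[of ?S "\<lambda>_. 1" \<alpha>] by fastforce
  also have "\<dots> \<le> (\<Sum>p\<in>{..<N} \<times> {..<N}. \<alpha> p)"
    by (rule sum_mono2) (use sub in auto)
  also have "\<dots> = c"
    using assms by (simp add: exps_def)
  finally have "card ?S \<le> c" .
  moreover have "card (exp_indices \<alpha>) \<le> card (fst ` ?S) + card (snd ` ?S)"
    unfolding exp_indices_def by (rule card_Un_le)
  moreover have "card (fst ` ?S) \<le> card ?S" "card (snd ` ?S) \<le> card ?S"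
    using finite_subset[OF sub] by (simp_all add: card_image_le)
  ultimately show ?thesis
    by linarith
qed

lemma
  assumes "exp_indices \<alpha> \<subseteq> {..<n}" "n \<le> N"
  shows exps_resize: "\<alpha> \<in> exps N c \<longleftrightarrow> \<alpha> \<in> exps n c"
    and monomial_fn_resize: "monomial_fn N \<alpha> = monomial_fn n \<alpha>"
proof -
  have sub: "{..<n} \<times> {..<n} \<subseteq> {..<N} \<times> {..<N}"
    using assms(2) by auto
  have zero: "\<alpha> p = 0" if "p \<notin> {..<n} \<times> {..<n}" for p
    using assms(1) that exp_indices_subset_iff by blast
  have "sum \<alpha> ({..<N} \<times> {..<N}) = sum \<alpha> ({..<n} \<times> {..<n})"
    by (rule sum.mono_neutral_right) (use sub zero in auto)
  then show "\<alpha> \<in> exps N c \<longleftrightarrow> \<alpha> \<in> exps n c"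
    using sub zero unfolding exps_def by auto
  have one: "\<forall>p\<in>{..<N} \<times> {..<N} - {..<n} \<times> {..<n}. (case p of (i, j) \<Rightarrow> X i j ^ \<alpha> (i, j)) = 1" for X
    using zero by (simp add: split_beta)
  show "monomial_fn N \<alpha> = monomial_fn n \<alpha>"
    unfolding monomial_fn_def fun_eq_iff
    by (intro allI prod.mono_neutral_right[OF _ sub one]) simp
qed

lemma monomial_fn_mat_restrict:
  assumes "\<alpha> \<in> exps N c"
  shows "monomial_fn N \<alpha> (mat_restrict W X) = (if exp_indices \<alpha> \<subseteq> W then monomial_fn N \<alpha> X else 0)"
proof (cases "exp_indices \<alpha> \<subseteq> W")
  case True
  then have "mat_restrict W X i j ^ \<alpha> (i, j) = X i j ^ \<alpha> (i, j)" for i j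
    by (cases "\<alpha> (i, j) = 0") (auto simp: mat_restrict_def exp_indices_subset_iff)
  then show ?thesis
    using True by (simp add: monomial_fn_def)
next
  case False
  then obtain i j where ij: "\<alpha> (i, j) \<noteq> 0" "(i, j) \<notin> W \<times> W"
    using exp_indices_subset_iff by auto
  then have "(i, j) \<in> {..<N} \<times> {..<N}" "mat_restrict W X i j ^ \<alpha> (i, j) = 0"
    using exps_vanish[OF assms] by (auto simp: mat_restrict_def)
  then show ?thesis
    using False unfolding monomial_fn_def by (auto intro!: prod_zero bexI[of _ "(i, j)"])
qed

lemma
  assumes h: "h permutes {..<N}" and \<alpha>: "\<alpha> \<in> exps N c"
  shows exps_permute: "\<alpha> \<circ> map_prod h h \<in> exps N c"
    and monomial_fn_act: "monomial_fn N \<alpha> (act h X) = monomial_fn N (\<alpha> \<circ> map_prod h h) X"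
proof -
  have bij: "bij_betw (map_prod h h) ({..<N} \<times> {..<N}) ({..<N} \<times> {..<N})"
    using bij_betw_map_prod permutes_imp_bij[OF h] by blast
  have "map_prod h h p \<in> {..<N} \<times> {..<N} \<longleftrightarrow> p \<in> {..<N} \<times> {..<N}" for p
    using permutes_in_image[OF h] by (cases p) auto
  then have "(\<alpha> \<circ> map_prod h h) p = 0" if "p \<notin> {..<N} \<times> {..<N}" for p
    using exps_vanish[OF \<alpha>] that by (metis comp_apply)
  moreover have "sum (\<alpha> \<circ> map_prod h h) ({..<N} \<times> {..<N}) = c"
    using sum.reindex_bij_betw[OF bij, of \<alpha>] \<alpha> by (simp add: exps_def)
  ultimately show "\<alpha> \<circ> map_prod h h \<in> exps N c"
    unfolding exps_def mem_Collect_eq by metis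
  have "monomial_fn N \<alpha> (act h X) = (\<Prod>p\<in>{..<N} \<times> {..<N}. X (inv h (fst p)) (inv h (snd p)) ^ \<alpha> p)"
    unfolding monomial_fn_def act_def by (rule prod.cong) auto
  also have "\<dots> = (\<Prod>p\<in>{..<N} \<times> {..<N}.
      X (inv h (fst (map_prod h h p))) (inv h (snd (map_prod h h p))) ^ \<alpha> (map_prod h h p))"
    by (rule prod.reindex_bij_betw[OF bij, symmetric])
  also have "\<dots> = monomial_fn N (\<alpha> \<circ> map_prod h h) X"
    unfolding monomial_fn_def by (rule prod.cong) (auto simp: permutes_inverses(2)[OF h])
  finally show "monomial_fn N \<alpha> (act h X) = monomial_fn N (\<alpha> \<circ> map_prod h h) X" .
qed

lemma hom_poly_subspace: "fs.subspace (hom_poly N c)"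
  unfolding hom_poly_def by (rule fs.subspace_span)

lemma monomial_fn_in_hom_poly: "\<alpha> \<in> exps N c \<Longrightarrow> monomial_fn N \<alpha> \<in> hom_poly N c"
  unfolding hom_poly_def by (rule fs.span_base) auto

lemma zero_in_hom_poly: "(\<lambda>X. 0) \<in> hom_poly N c"
  using fs.subspace_0[OF hom_poly_subspace] by (simp add: zero_fun_def)

lemma hom_poly_lincomb:
  "p \<in> hom_poly N c \<Longrightarrow> q \<in> hom_poly N c \<Longrightarrow> (\<lambda>X. a * p X + q X) \<in> hom_poly N c"
proof -
  assume "p \<in> hom_poly N c" "q \<in> hom_poly N c"
  then have "fscale a p + q \<in> hom_poly N c"
    by (intro fs.subspace_add[OF hom_poly_subspace] fs.subspace_scale[OF hom_poly_subspace])
  then show ?thesis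
    by (simp add: fscale_def plus_fun_def)
qed

lemma hom_poly_scale: "p \<in> hom_poly N c \<Longrightarrow> (\<lambda>X. a * p X) \<in> hom_poly N c"
  using hom_poly_lincomb[OF _ zero_in_hom_poly] by simp

lemma hom_poly_sum:
  "(\<And>a. a \<in> A \<Longrightarrow> (\<lambda>X. f a X) \<in> hom_poly N c) \<Longrightarrow> (\<lambda>X. \<Sum>a\<in>A. f a X) \<in> hom_poly N c"
proof (induction A rule: infinite_finite_induct)
  case (insert x F)
  then show ?case
    using hom_poly_lincomb[of "\<lambda>X. f x X" N c "\<lambda>X. \<Sum>a\<in>F. f a X" 1] by simp
qed (simp_all add: zero_in_hom_poly)

lemma hom_poly_induct [consumes 1, case_names zero monomial]:
  assumes "p \<in> hom_poly N c"
    and "P (\<lambda>X. 0)"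
    and "\<And>a \<alpha> q. \<alpha> \<in> exps N c \<Longrightarrow> P q \<Longrightarrow> P (\<lambda>X. a * monomial_fn N \<alpha> X + q X)"
  shows "P p"
  using assms(1) unfolding hom_poly_def
proof (induction rule: fs.span_induct_alt)
  case base
  then show ?case
    using assms(2) by (simp add: zero_fun_def)
next
  case (step a m q)
  then show ?case
    using assms(3) by (auto simp: fscale_def plus_fun_def)
qed

lemma hom_poly_compose:
  assumes "p \<in> hom_poly N c"
    and "\<And>\<alpha>. \<alpha> \<in> exps N c \<Longrightarrow> (\<lambda>X. monomial_fn N \<alpha> (\<sigma> X)) \<in> hom_poly M c"
  shows "(\<lambda>X. p (\<sigma> X)) \<in> hom_poly M c"
  using assms(1)
proof (induction rule: hom_poly_induct)
  case (monomial a \<alpha> q)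
  then show ?case
    using hom_poly_lincomb[OF assms(2)] by simp
qed (simp add: zero_in_hom_poly)

lemma hom_poly_mono:
  assumes "n \<le> N"
  shows "hom_poly n c \<subseteq> hom_poly N c"
proof -
  have "monomial_fn n ` exps n c \<subseteq> monomial_fn N ` exps N c"
  proof
    fix f assume "f \<in> monomial_fn n ` exps n c"
    then obtain \<alpha> where \<alpha>: "\<alpha> \<in> exps n c" "f = monomial_fn n \<alpha>"
      by blast
    note indices = exp_indices_exps[OF \<alpha>(1)]
    show "f \<in> monomial_fn N ` exps N c"
      using \<alpha> exps_resize[OF indices assms] monomial_fn_resize[OF indices assms] by (metis image_eqI)
  qed
  then show ?thesis
    unfolding hom_poly_def by (rule fs.span_mono)
qed

lemma monomial_fn_mat_restrict_in_hom_poly: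
  assumes "\<alpha> \<in> exps N c" "\<And>\<beta>. \<beta> \<in> exps N c \<Longrightarrow> exp_indices \<beta> \<subseteq> W \<Longrightarrow> monomial_fn N \<beta> \<in> hom_poly M c"
  shows "(\<lambda>X. monomial_fn N \<alpha> (mat_restrict W X)) \<in> hom_poly M c"
proof (cases "exp_indices \<alpha> \<subseteq> W")
  case True
  then show ?thesis
    using assms by (simp add: monomial_fn_mat_restrict[OF assms(1)])
next
  case False
  then show ?thesis
    by (simp add: monomial_fn_mat_restrict[OF assms(1)] zero_in_hom_poly)
qed

lemma hom_poly_mat_restrict:
  assumes "p \<in> hom_poly N c"
  shows "(\<lambda>X. p (mat_restrict W X)) \<in> hom_poly N c"
  using assms
  by (rule hom_poly_compose) (rule monomial_fn_mat_restrict_in_hom_poly, assumption, rule monomial_fn_in_hom_poly)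

lemma hom_poly_act:
  assumes "p \<in> hom_poly N c" "h permutes {..<N}"
  shows "(\<lambda>X. p (act h X)) \<in> hom_poly N c"
  using assms(1)
proof (rule hom_poly_compose)
  fix \<alpha> assume "\<alpha> \<in> exps N c"
  then show "(\<lambda>X. monomial_fn N \<alpha> (act h X)) \<in> hom_poly N c"
    using monomial_fn_in_hom_poly[OF exps_permute[OF assms(2)]] by (simp add: monomial_fn_act[OF assms(2)])
qed

lemma hom_poly_truncate:
  assumes "n \<le> N" "p \<in> hom_poly N c"
  shows "(\<lambda>X. p (mat_restrict {..<n} X)) \<in> hom_poly n c"
  using assms(2)
proof (rule hom_poly_compose)
  fix \<alpha> assume "\<alpha> \<in> exps N c"
  then show "(\<lambda>X. monomial_fn N \<alpha> (mat_restrict {..<n} X)) \<in> hom_poly n c"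
  proof (rule monomial_fn_mat_restrict_in_hom_poly)
    fix \<beta> assume "\<beta> \<in> exps N c" "exp_indices \<beta> \<subseteq> {..<n}"
    then show "monomial_fn N \<beta> \<in> hom_poly n c"
      using exps_resize[OF _ assms(1)] monomial_fn_resize[OF _ assms(1)] monomial_fn_in_hom_poly by metis
  qed
qed

lemma hom_poly_mat_restrict_self:
  assumes "p \<in> hom_poly n c"
  shows "p (mat_restrict {..<n} X) = p X"
  using assms
proof (induction arbitrary: X rule: hom_poly_induct)
  case (monomial a \<alpha> q)
  then show ?case
    by (simp add: monomial_fn_mat_restrict exp_indices_exps)
qed simp

section \<open>Inclusion-exclusion over index sets\<close>

definition small_subsets :: "nat \<Rightarrow> nat \<Rightarrow> nat set set" where
  "small_subsets N k = {T. T \<subseteq> {..<N} \<and> card T \<le> k}"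

definition incl_excl :: "nat \<Rightarrow> nat \<Rightarrow> (nat set \<Rightarrow> real) \<Rightarrow> real" where
  "incl_excl N k F = (\<Sum>T\<in>small_subsets N k. \<Sum>U\<in>Pow T. (-1) ^ card (T - U) * F U)"

lemma finite_small_subsets: "finite (small_subsets N k)"
  by (rule finite_subset[of _ "Pow {..<N}"]) (auto simp: small_subsets_def)

lemma small_subsets_subset:
  assumes "T \<in> small_subsets N k" "U \<subseteq> T"
  shows "U \<in> small_subsets N k"
proof -
  have "T \<subseteq> {..<N}" "card T \<le> k"
    using assms(1) by (simp_all add: small_subsets_def)
  moreover have "card U \<le> card T"
    using card_mono[OF finite_subset[OF \<open>T \<subseteq> {..<N}\<close> finite_lessThan] assms(2)] .
  ultimately show ?thesis
    using assms(2) by (simp add: small_subsets_def)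
qed

lemma small_subsets_permute_image:
  assumes "\<pi> permutes {..<N}"
  shows "\<pi> ` T \<in> small_subsets N k \<longleftrightarrow> T \<in> small_subsets N k"
proof -
  have "\<pi> ` T \<subseteq> {..<N} \<longleftrightarrow> T \<subseteq> {..<N}"
    using assms by (metis permutes_image permutes_inj inj_image_subset_iff)
  moreover have "card (\<pi> ` T) = card T"
    using inj_on_subset[OF permutes_inj[OF assms] subset_UNIV] by (rule card_image)
  ultimately show ?thesis
    unfolding small_subsets_def by simp
qed

lemma sum_Pow_alternating_superset:
  assumes "finite T"
  shows "(\<Sum>U\<in>Pow T. (-1) ^ card (T - U) * (if D \<subseteq> U then 1 else 0)) = (if T = D then 1 else (0::real))"
proof -
  have "(if T = D then 1 else (0::real))
      = (\<Sum>U\<in>Pow T. (-1) ^ (card T - card U) * (\<Sum>V\<in>Pow U. if V = D then 1 else 0))"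
    by (rule inclusion_exclusion_mobius[OF _ assms]) (rule refl)
  also have "\<dots> = (\<Sum>U\<in>Pow T. (-1) ^ card (T - U) * (if D \<subseteq> U then 1 else 0))"
  proof (rule sum.cong)
    fix U assume "U \<in> Pow T"
    then have "finite U" "U \<subseteq> T"
      using assms finite_subset by auto
    then show "(-1) ^ (card T - card U) * (\<Sum>V\<in>Pow U. if V = D then 1 else 0)
        = (-1) ^ card (T - U) * (if D \<subseteq> U then 1 else (0::real))"
      by (simp add: card_Diff_subset)
  qed simp
  finally show ?thesis ..
qed

lemma incl_excl_superset_indicator:
  assumes "D \<in> small_subsets N k"
  shows "incl_excl N k (\<lambda>U. if D \<subseteq> U then a else 0) = a"
proof -
  have "incl_excl N k (\<lambda>U. if D \<subseteq> U then a else 0)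
      = (\<Sum>T\<in>small_subsets N k. a * (\<Sum>U\<in>Pow T. (-1) ^ card (T - U) * (if D \<subseteq> U then 1 else 0)))"
    unfolding incl_excl_def sum_distrib_left by (intro sum.cong) auto
  also have "\<dots> = (\<Sum>T\<in>small_subsets N k. if T = D then a else 0)"
  proof (intro sum.cong refl)
    fix T assume "T \<in> small_subsets N k"
    then have "finite T"
      unfolding small_subsets_def using finite_subset by blast
    then show "a * (\<Sum>U\<in>Pow T. (-1) ^ card (T - U) * (if D \<subseteq> U then 1 else 0)) = (if T = D then a else 0)"
      by (simp only: sum_Pow_alternating_superset) simp
  qed
  also have "\<dots> = a"
    using assms finite_small_subsets by simp
  finally show ?thesis .
qed

lemma incl_excl_lincomb: "incl_excl N k (\<lambda>U. a * F U + G U) = a * incl_excl N k F + incl_excl N k G"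
  unfolding incl_excl_def by (simp add: sum.distrib sum_distrib_left algebra_simps)

lemma incl_excl_cong:
  "(\<And>U. U \<in> small_subsets N k \<Longrightarrow> F U = G U) \<Longrightarrow> incl_excl N k F = incl_excl N k G"
  unfolding incl_excl_def by (intro sum.cong refl) (auto dest: small_subsets_subset)

lemma incl_excl_permute:
  assumes "\<pi> permutes {..<N}"
  shows "incl_excl N k (\<lambda>U. F (\<pi> ` U)) = incl_excl N k F"
proof -
  have inj: "inj \<pi>"
    using permutes_inj[OF assms] .
  have inner: "(\<Sum>U\<in>Pow T. (-1) ^ card (T - U) * F (\<pi> ` U))
      = (\<Sum>U\<in>Pow (\<pi> ` T). (-1) ^ card (\<pi> ` T - U) * F U)" for T
  proof -
    have "bij_betw (image \<pi>) (Pow T) (Pow (\<pi> ` T))"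
      by (rule bij_betw_image_Pow[OF inj_on_imp_bij_betw[OF inj_on_subset[OF inj subset_UNIV]]])
    moreover have "card (\<pi> ` T - \<pi> ` U) = card (T - U)" for U
      using inj by (metis card_image image_set_diff inj_on_subset subset_UNIV)
    ultimately show ?thesis
      using sum.reindex_bij_betw[of "image \<pi>" "Pow T" "Pow (\<pi> ` T)"
          "\<lambda>U. (-1) ^ card (\<pi> ` T - U) * F U"] by simp
  qed
  have inverses: "inv \<pi> ` \<pi> ` A = A" "\<pi> ` inv \<pi> ` A = A" for A
    by (simp_all add: image_comp permutes_inverses[OF assms])
  show ?thesis
    unfolding incl_excl_def inner
    by (rule sum.reindex_bij_witness[of _ "image (inv \<pi>)" "image \<pi>"])
      (simp_all add: inverses small_subsets_permute_image[OF assms]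
        small_subsets_permute_image[OF permutes_inv[OF assms]])
qed

lemma hom_poly_incl_excl:
  assumes "\<And>U. U \<in> small_subsets N k \<Longrightarrow> (\<lambda>X. F U X) \<in> hom_poly M c"
  shows "(\<lambda>X. incl_excl N k (\<lambda>U. F U X)) \<in> hom_poly M c"
  unfolding incl_excl_def
  by (intro hom_poly_sum hom_poly_scale) (auto intro: assms small_subsets_subset)

lemma hom_poly_eq_incl_excl:
  assumes "f \<in> hom_poly N c"
  shows "f X = incl_excl N (2 * c) (\<lambda>U. f (mat_restrict (U \<union> B) X))"
  using assms
proof (induction arbitrary: X rule: hom_poly_induct)
  case zero
  then show ?case
    by (simp add: incl_excl_def)
next
  case (monomial a \<alpha> q)
  let ?D = "exp_indices \<alpha> - B"
  have indices: "exp_indices \<alpha> \<subseteq> {..<N}"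
    using exp_indices_exps[OF monomial(1)] .
  have "card ?D \<le> card (exp_indices \<alpha>)"
    by (rule card_mono[OF finite_subset[OF indices finite_lessThan]]) blast
  then have D: "?D \<in> small_subsets N (2 * c)"
    using indices card_exp_indices_exps[OF monomial(1)] by (auto simp: small_subsets_def)
  have restrict: "monomial_fn N \<alpha> (mat_restrict (U \<union> B) X) = (if ?D \<subseteq> U then monomial_fn N \<alpha> X else 0)" for U
  proof -
    have "exp_indices \<alpha> \<subseteq> U \<union> B \<longleftrightarrow> ?D \<subseteq> U"
      by blast
    then show ?thesis
      by (simp only: monomial_fn_mat_restrict[OF monomial(1)])
  qed
  have "a * monomial_fn N \<alpha> X + q X
      = a * incl_excl N (2 * c) (\<lambda>U. if ?D \<subseteq> U then monomial_fn N \<alpha> X else 0)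
        + incl_excl N (2 * c) (\<lambda>U. q (mat_restrict (U \<union> B) X))"
    by (simp only: incl_excl_superset_indicator[OF D] monomial.IH[symmetric])
  also have "\<dots> = incl_excl N (2 * c)
      (\<lambda>U. a * monomial_fn N \<alpha> (mat_restrict (U \<union> B) X) + q (mat_restrict (U \<union> B) X))"
    by (simp add: restrict incl_excl_lincomb)
  finally show ?case .
qed

(* Any permutation of {..<N} moving W into {..<n} would do: by the transfer lemmas, invariant
   and equivariant data read through it do not depend on the choice. *)
definition relabel :: "nat \<Rightarrow> nat \<Rightarrow> nat set \<Rightarrow> nat \<Rightarrow> nat" where
  "relabel n N W = (SOME h. h permutes {..<N} \<and> h ` W \<subseteq> {..<n})"

lemma
  assumes "W \<subseteq> {..<N}" "card W \<le> n" "n \<le> N"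
  shows relabel_permutes: "relabel n N W permutes {..<N}"
    and relabel_image: "relabel n N W ` W \<subseteq> {..<n}"
  using someI_ex[OF exists_permutes_into[OF assms]] unfolding relabel_def by blast+

lemma
  assumes "U \<in> small_subsets N k" "k \<le> n" "n \<le> N"
  shows relabel_small_permutes: "relabel n N U permutes {..<N}"
    and relabel_small_image: "relabel n N U ` U \<subseteq> {..<n}"
  using relabel_permutes relabel_image assms unfolding small_subsets_def by auto

lemma small_subsets_Un_pair:
  assumes "U \<in> small_subsets N k" "i < N" "j < N"
  shows "U \<union> {i, j} \<in> small_subsets N (k + 2)"
proof -
  have "card (U \<union> {i, j}) \<le> card U + card {i, j}"
    by (rule card_Un_le)
  also have "card {i, j} \<le> 2"
    by (simp add: card_insert_le_m1)
  finally show ?thesis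
    using assms unfolding small_subsets_def by auto
qed

lemma
  assumes "U \<in> small_subsets N (2 * c)" "i < N" "j < N" "2 * c + 2 \<le> n" "n \<le> N"
  shows relabel_pair_permutes: "relabel n N (U \<union> {i, j}) permutes {..<N}"
    and relabel_pair_image: "relabel n N (U \<union> {i, j}) ` (U \<union> {i, j}) \<subseteq> {..<n}"
  using relabel_small_permutes[OF small_subsets_Un_pair[OF assms(1-3)] assms(4,5)]
    relabel_small_image[OF small_subsets_Un_pair[OF assms(1-3)] assms(4,5)] by blast+

section \<open>Invariant polynomials\<close>

definition inv_polys :: "nat \<Rightarrow> nat \<Rightarrow> (mat \<Rightarrow> real) set" where
  "inv_polys n c = {p \<in> hom_poly n c. invariant n p}"

definition truncate_poly :: "nat \<Rightarrow> (mat \<Rightarrow> real) \<Rightarrow> mat \<Rightarrow> real" where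
  "truncate_poly n P X = P (mat_restrict {..<n} X)"

definition extend_inv_poly :: "nat \<Rightarrow> nat \<Rightarrow> nat \<Rightarrow> (mat \<Rightarrow> real) \<Rightarrow> mat \<Rightarrow> real" where
  "extend_inv_poly n N c p X = incl_excl N (2 * c) (\<lambda>U. p (act (relabel n N U) (mat_restrict U X)))"

lemma inv_polys_subspace: "fs.subspace (inv_polys N c)"
  unfolding fs.subspace_def inv_polys_def invariant_def
  using fs.subspace_0[OF hom_poly_subspace] fs.subspace_add[OF hom_poly_subspace]
    fs.subspace_scale[OF hom_poly_subspace]
  by (simp add: zero_fun_def plus_fun_def fscale_def)

lemma truncate_poly_linear: "Vector_Spaces.linear fscale fscale (truncate_poly n)"
  by unfold_locales (auto simp: truncate_poly_def fscale_def plus_fun_def fun_eq_iff)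

lemma truncate_poly_in_inv_polys:
  assumes "n \<le> N" "P \<in> inv_polys N c"
  shows "truncate_poly n P \<in> inv_polys n c"
proof -
  have "truncate_poly n P \<in> hom_poly n c"
    using hom_poly_truncate[OF assms(1)] assms(2) by (simp add: inv_polys_def truncate_poly_def[abs_def])
  moreover have "truncate_poly n P (act g X) = truncate_poly n P X" if "g permutes {..<n}" for g X
    using assms(2) permutes_lessThan_mono[OF that assms(1)]
    by (simp add: truncate_poly_def mat_restrict_lessThan_act[OF that] inv_polys_def invariant_def)
  ultimately show ?thesis
    by (simp add: inv_polys_def invariant_def)
qed

lemma invariant_relabel_act:
  assumes "2 * c \<le> n" "n \<le> N" "invariant n p" and g: "g permutes {..<N}"
    and U: "U \<in> small_subsets N (2 * c)"
  shows "p (act (relabel n N U) (mat_restrict U (act g X)))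
    = p (act (relabel n N (inv g ` U)) (mat_restrict (inv g ` U) X))"
proof -
  have U': "inv g ` U \<in> small_subsets N (2 * c)"
    using U small_subsets_permute_image[OF permutes_inv[OF g]] by blast
  note relabel = relabel_small_permutes[OF _ assms(1,2)] relabel_small_image[OF _ assms(1,2)]
  have bij: "bij g" "bij (relabel n N U)"
    using g relabel(1)[OF U] by (simp_all add: permutes_bij)
  have "p (act (relabel n N U) (mat_restrict U (act g X)))
      = p (act (relabel n N U \<circ> g) (mat_restrict (inv g ` U) X))"
    by (simp add: mat_restrict_act act_act bij)
  also have "\<dots> = p (act (relabel n N (inv g ` U)) (mat_restrict (inv g ` U) X))"
  proof (rule invariant_act_mat_restrict_transfer[OF assms(3)])
    show "bij (relabel n N U \<circ> g)" "bij (relabel n N (inv g ` U))"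
      using bij relabel(1)[OF U'] by (auto intro: bij_comp permutes_bij)
    show "(relabel n N U \<circ> g) ` inv g ` U \<subseteq> {..<n}" "relabel n N (inv g ` U) ` inv g ` U \<subseteq> {..<n}"
      using relabel(2)[OF U] relabel(2)[OF U'] by (simp_all add: image_comp permutes_inverses(1)[OF g])
  qed
  finally show ?thesis .
qed

lemma extend_inv_poly_in_inv_polys:
  assumes "2 * c \<le> n" "n \<le> N" "p \<in> inv_polys n c"
  shows "extend_inv_poly n N c p \<in> inv_polys N c"
proof -
  have p: "p \<in> hom_poly N c" "invariant n p"
    using assms hom_poly_mono by (auto simp: inv_polys_def)
  have "extend_inv_poly n N c p \<in> hom_poly N c"
    unfolding extend_inv_poly_def[abs_def]
    by (intro hom_poly_incl_excl hom_poly_mat_restrict[of "\<lambda>Y. p (act _ Y)", simplified]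
        hom_poly_act[OF p(1)] relabel_small_permutes[OF _ assms(1,2)])
  moreover have "extend_inv_poly n N c p (act g X) = extend_inv_poly n N c p X"
    if g: "g permutes {..<N}" for g X
  proof -
    let ?F = "\<lambda>U. p (act (relabel n N U) (mat_restrict U X))"
    have "extend_inv_poly n N c p (act g X) = incl_excl N (2 * c) (\<lambda>U. ?F (inv g ` U))"
      unfolding extend_inv_poly_def
      by (rule incl_excl_cong) (rule invariant_relabel_act[OF assms(1,2) p(2) g])
    also have "\<dots> = extend_inv_poly n N c p X"
      unfolding extend_inv_poly_def by (rule incl_excl_permute[OF permutes_inv[OF g]])
    finally show ?thesis .
  qed
  ultimately show ?thesis
    by (simp add: inv_polys_def invariant_def)
qed

lemma truncate_extend_inv_poly:
  assumes "2 * c \<le> n" "n \<le> N" "p \<in> inv_polys n c"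
  shows "truncate_poly n (extend_inv_poly n N c p) = p"
proof
  fix X
  have p: "p \<in> hom_poly n c" "p \<in> hom_poly N c" "invariant n p"
    using assms hom_poly_mono by (auto simp: inv_polys_def)
  have "truncate_poly n (extend_inv_poly n N c p) X
      = incl_excl N (2 * c) (\<lambda>U. p (mat_restrict (U \<union> {}) (mat_restrict {..<n} X)))"
    unfolding truncate_poly_def extend_inv_poly_def
  proof (rule incl_excl_cong)
    fix U assume U: "U \<in> small_subsets N (2 * c)"
    have "p (act (relabel n N U) (mat_restrict (U \<inter> {..<n}) X)) = p (act id (mat_restrict (U \<inter> {..<n}) X))"
      using relabel_small_permutes[OF U assms(1,2)] relabel_small_image[OF U assms(1,2)]
      by (intro invariant_act_mat_restrict_transfer[OF p(3)]) (auto simp: permutes_bij)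
    then show "p (act (relabel n N U) (mat_restrict U (mat_restrict {..<n} X)))
        = p (mat_restrict (U \<union> {}) (mat_restrict {..<n} X))"
      by (simp add: mat_restrict_mat_restrict act_id)
  qed
  also have "\<dots> = p (mat_restrict {..<n} X)"
    by (rule hom_poly_eq_incl_excl[OF p(2), symmetric])
  also have "\<dots> = p X"
    using hom_poly_mat_restrict_self[OF p(1)] .
  finally show "truncate_poly n (extend_inv_poly n N c p) X = p X" .
qed

lemma extend_truncate_inv_poly:
  assumes "2 * c \<le> n" "n \<le> N" "P \<in> inv_polys N c"
  shows "extend_inv_poly n N c (truncate_poly n P) = P"
proof
  fix X
  have P: "P \<in> hom_poly N c" "invariant N P"
    using assms by (auto simp: inv_polys_def)
  have "extend_inv_poly n N c (truncate_poly n P) X = incl_excl N (2 * c) (\<lambda>U. P (mat_restrict (U \<union> {}) X))"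
    unfolding truncate_poly_def extend_inv_poly_def
  proof (rule incl_excl_cong)
    fix U assume U: "U \<in> small_subsets N (2 * c)"
    note h = relabel_small_permutes[OF U assms(1,2)] relabel_small_image[OF U assms(1,2)]
    have "P (mat_restrict {..<n} (act (relabel n N U) (mat_restrict U X)))
        = P (act (relabel n N U) (mat_restrict U X))"
      by (simp add: mat_restrict_act_mat_restrict[OF permutes_bij[OF h(1)] h(2)])
    also have "\<dots> = P (mat_restrict (U \<union> {}) X)"
      using P(2) h(1) unfolding invariant_def by simp
    finally show "P (mat_restrict {..<n} (act (relabel n N U) (mat_restrict U X))) = P (mat_restrict (U \<union> {}) X)" .
  qed
  also have "\<dots> = P X"
    by (rule hom_poly_eq_incl_excl[OF P(1), symmetric])
  finally show "extend_inv_poly n N c (truncate_poly n P) X = P X" .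
qed

theorem inv_dim_eq:
  assumes "2 * c \<le> n" "n \<le> N"
  shows "inv_dim n c = inv_dim N c"
proof -
  interpret truncation: Vector_Spaces.linear fscale fscale "truncate_poly n"
    by (rule truncate_poly_linear)
  show ?thesis
    unfolding inv_dim_def inv_polys_def[symmetric]
    by (rule truncation.dim_eq_if_inverse_on[where g = "extend_inv_poly n N c",
        OF inv_polys_subspace image_subsetI image_subsetI])
      (simp_all add: truncate_poly_in_inv_polys[OF assms(2)] extend_inv_poly_in_inv_polys[OF assms]
         extend_truncate_inv_poly[OF assms] truncate_extend_inv_poly[OF assms])
qed

section \<open>Equivariant polynomial maps\<close>

definition equiv_maps :: "nat \<Rightarrow> nat \<Rightarrow> (mat \<Rightarrow> mat) set" where
  "equiv_maps n c = {P \<in> hom_poly_map n c. equivariant n P}"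

definition truncate_map :: "nat \<Rightarrow> (mat \<Rightarrow> mat) \<Rightarrow> mat \<Rightarrow> mat" where
  "truncate_map n P X i j = (if i < n \<and> j < n then P (mat_restrict {..<n} X) i j else 0)"

definition relabelled_entry :: "nat \<Rightarrow> nat \<Rightarrow> (mat \<Rightarrow> mat) \<Rightarrow> mat \<Rightarrow> nat \<Rightarrow> nat \<Rightarrow> nat set \<Rightarrow> real" where
  "relabelled_entry n N Q X i j W =
     Q (act (relabel n N W) (mat_restrict W X)) (relabel n N W i) (relabel n N W j)"

definition extend_equiv_map :: "nat \<Rightarrow> nat \<Rightarrow> nat \<Rightarrow> (mat \<Rightarrow> mat) \<Rightarrow> mat \<Rightarrow> mat" where
  "extend_equiv_map n N c Q X i j = (if i < N \<and> j < N
     then incl_excl N (2 * c) (\<lambda>U. relabelled_entry n N Q X i j (U \<union> {i, j})) else 0)"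

lemma truncate_map_act_mat_restrict:
  assumes "bij h" "h ` W \<subseteq> {..<n}" "i \<in> W" "j \<in> W"
  shows "truncate_map n P (act h (mat_restrict W X)) (h i) (h j) = P (act h (mat_restrict W X)) (h i) (h j)"
proof -
  have "h i < n \<and> h j < n"
    using assms(2-4) by auto
  then show ?thesis
    by (simp only: truncate_map_def if_True simp_thms mat_restrict_act_mat_restrict[OF assms(1,2)])
qed

lemma equiv_maps_subspace: "ms.subspace (equiv_maps N c)"
proof -
  have entries: "(\<lambda>X. P X i j) \<in> hom_poly N c" if "P \<in> equiv_maps N c" "i < N" "j < N" for P i j
    using that by (simp add: equiv_maps_def hom_poly_map_def)
  have "(\<lambda>X. P X i j + Q X i j) \<in> hom_poly N c"
    if "P \<in> equiv_maps N c" "Q \<in> equiv_maps N c" "i < N" "j < N" for P Q i j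
    using hom_poly_lincomb[OF entries[OF that(1,3,4)] entries[OF that(2,3,4)], of 1] by simp
  moreover have "(\<lambda>X. a * P X i j) \<in> hom_poly N c" if "P \<in> equiv_maps N c" "i < N" "j < N" for a P i j
    using hom_poly_scale[OF entries] that by blast
  moreover have "(\<lambda>X. (0 :: mat) i j) \<in> hom_poly N c" for i j
    using zero_in_hom_poly by (simp add: zero_fun_def)
  ultimately show ?thesis
    unfolding ms.subspace_def
    by (auto simp: equiv_maps_def hom_poly_map_def equivariant_def mscale_def act_def plus_fun_def zero_fun_def)
qed

lemma truncate_map_linear: "Vector_Spaces.linear mscale mscale (truncate_map n)"
  by unfold_locales (auto simp: truncate_map_def mscale_def plus_fun_def fun_eq_iff)

lemma truncate_map_in_equiv_maps:
  assumes "n \<le> N" "P \<in> equiv_maps N c"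
  shows "truncate_map n P \<in> equiv_maps n c"
proof -
  have P: "P \<in> hom_poly_map N c" "equivariant N P"
    using assms(2) by (auto simp: equiv_maps_def)
  have "(\<lambda>X. truncate_map n P X i j) \<in> hom_poly n c" if "i < n" "j < n" for i j
    using hom_poly_truncate[OF assms(1), of "\<lambda>X. P X i j"] P(1) that assms(1)
    by (simp add: truncate_map_def hom_poly_map_def)
  then have "truncate_map n P \<in> hom_poly_map n c"
    by (simp add: hom_poly_map_def truncate_map_def)
  moreover have "truncate_map n P (act g X) i j = act g (truncate_map n P X) i j"
    if g: "g permutes {..<n}" for g X i j
  proof (cases "i < n \<and> j < n")
    case True
    have "P (act g (mat_restrict {..<n} X)) = act g (P (mat_restrict {..<n} X))"
      using P(2) permutes_lessThan_mono[OF g assms(1)] unfolding equivariant_def by blast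
    then have "truncate_map n P (act g X) i j = act g (P (mat_restrict {..<n} X)) i j"
      using True by (simp add: truncate_map_def mat_restrict_lessThan_act[OF g])
    also have "\<dots> = act g (truncate_map n P X) i j"
      using True inv_permutes_lessThan_iff[OF g] by (simp add: truncate_map_def act_def)
    finally show ?thesis .
  next
    case False
    then show ?thesis
      using inv_permutes_lessThan_iff[OF g] by (auto simp: truncate_map_def act_def)
  qed
  ultimately show ?thesis
    by (auto simp: equiv_maps_def equivariant_def fun_eq_iff)
qed

lemma hom_poly_relabelled_entry:
  assumes "2 * c + 2 \<le> n" "n \<le> N" "Q \<in> hom_poly_map n c"
    and "U \<in> small_subsets N (2 * c)" "i < N" "j < N"
  shows "(\<lambda>X. relabelled_entry n N Q X i j (U \<union> {i, j})) \<in> hom_poly N c"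
proof -
  let ?h = "relabel n N (U \<union> {i, j})"
  note h = relabel_pair_permutes[OF assms(4-6,1,2)] relabel_pair_image[OF assms(4-6,1,2)]
  have "?h i < n" "?h j < n"
    using h(2) by auto
  then have "(\<lambda>Y. Q Y (?h i) (?h j)) \<in> hom_poly N c"
    using assms(3) hom_poly_mono[OF assms(2)] by (auto simp: hom_poly_map_def)
  from hom_poly_mat_restrict[OF hom_poly_act[OF this h(1)]]
  show ?thesis
    by (simp add: relabelled_entry_def)
qed

lemma equivariant_relabelled_entry_act:
  assumes "2 * c + 2 \<le> n" "n \<le> N" "equivariant n Q" and g: "g permutes {..<N}"
    and U: "U \<in> small_subsets N (2 * c)" and ij: "i < N" "j < N"
  defines "i' \<equiv> inv g i" and "j' \<equiv> inv g j"
  shows "relabelled_entry n N Q (act g X) i j (U \<union> {i, j})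
    = relabelled_entry n N Q X i' j' (inv g ` U \<union> {i', j'})"
proof -
  let ?h = "relabel n N (U \<union> {i, j})" and ?W = "inv g ` U \<union> {i', j'}"
  have ij': "i' < N" "j' < N" "g i' = i" "g j' = j"
    using ij inv_permutes_lessThan_iff[OF g] permutes_inverses(1)[OF g] by (auto simp: i'_def j'_def)
  have U': "inv g ` U \<in> small_subsets N (2 * c)"
    using U small_subsets_permute_image[OF permutes_inv[OF g]] by blast
  have W: "inv g ` (U \<union> {i, j}) = ?W" "g ` ?W = U \<union> {i, j}"
    by (auto simp: i'_def j'_def image_comp permutes_inverses(1)[OF g])
  note h = relabel_pair_permutes[OF U ij assms(1,2)] relabel_pair_image[OF U ij assms(1,2)]
  have bij: "bij g" "bij ?h"
    using g h(1) by (simp_all add: permutes_bij)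
  have "relabelled_entry n N Q (act g X) i j (U \<union> {i, j})
      = Q (act (?h \<circ> g) (mat_restrict ?W X)) ((?h \<circ> g) i') ((?h \<circ> g) j')"
    unfolding relabelled_entry_def
    by (simp only: mat_restrict_act[OF bij(1)] W(1) act_act[OF bij(2,1)] comp_apply ij'(3,4))
  also have "\<dots> = relabelled_entry n N Q X i' j' ?W"
    unfolding relabelled_entry_def
  proof (rule equivariant_act_mat_restrict_transfer[OF assms(3)])
    show "bij (?h \<circ> g)" "bij (relabel n N ?W)"
      using bij relabel_pair_permutes[OF U' ij'(1,2) assms(1,2)] by (auto intro: bij_comp permutes_bij)
    show "(?h \<circ> g) ` ?W \<subseteq> {..<n}"
      using h(2) by (simp only: image_comp[symmetric] W(2))
    show "relabel n N ?W ` ?W \<subseteq> {..<n}"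
      using relabel_pair_image[OF U' ij'(1,2) assms(1,2)] .
  qed auto
  finally show ?thesis .
qed

lemma extend_equiv_map_in_equiv_maps:
  assumes "2 * c + 2 \<le> n" "n \<le> N" "Q \<in> equiv_maps n c"
  shows "extend_equiv_map n N c Q \<in> equiv_maps N c"
proof -
  have Q: "Q \<in> hom_poly_map n c" "equivariant n Q"
    using assms(3) by (auto simp: equiv_maps_def)
  have "(\<lambda>X. extend_equiv_map n N c Q X i j) \<in> hom_poly N c" if "i < N" "j < N" for i j
    using that hom_poly_incl_excl[OF hom_poly_relabelled_entry[OF assms(1,2) Q(1)]]
    by (simp add: extend_equiv_map_def)
  then have "extend_equiv_map n N c Q \<in> hom_poly_map N c"
    by (simp add: hom_poly_map_def extend_equiv_map_def)
  moreover have "extend_equiv_map n N c Q (act g X) i j = act g (extend_equiv_map n N c Q X) i j"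
    if g: "g permutes {..<N}" for g X i j
  proof (cases "i < N \<and> j < N")
    case False
    then show ?thesis
      using inv_permutes_lessThan_iff[OF g] by (auto simp: extend_equiv_map_def act_def)
  next
    case True
    let ?F = "\<lambda>U. relabelled_entry n N Q X (inv g i) (inv g j) (U \<union> {inv g i, inv g j})"
    have "extend_equiv_map n N c Q (act g X) i j = incl_excl N (2 * c) (\<lambda>U. ?F (inv g ` U))"
      unfolding extend_equiv_map_def if_P[OF True]
      by (rule incl_excl_cong) (use equivariant_relabelled_entry_act[OF assms(1,2) Q(2) g] True in blast)
    also have "\<dots> = incl_excl N (2 * c) ?F"
      by (rule incl_excl_permute[OF permutes_inv[OF g]])
    also have "\<dots> = act g (extend_equiv_map n N c Q X) i j"
      using True inv_permutes_lessThan_iff[OF g] by (simp add: extend_equiv_map_def act_def)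
    finally show ?thesis .
  qed
  ultimately show ?thesis
    by (auto simp: equiv_maps_def equivariant_def fun_eq_iff)
qed

lemma truncate_extend_equiv_map:
  assumes "2 * c + 2 \<le> n" "n \<le> N" "Q \<in> equiv_maps n c"
  shows "truncate_map n (extend_equiv_map n N c Q) = Q"
proof (intro ext)
  fix X i j
  have Q: "Q \<in> hom_poly_map n c" "equivariant n Q"
    using assms(3) by (auto simp: equiv_maps_def)
  show "truncate_map n (extend_equiv_map n N c Q) X i j = Q X i j"
  proof (cases "i < n \<and> j < n")
    case False
    then show ?thesis
      using Q(1) by (auto simp: truncate_map_def hom_poly_map_def)
  next
    case True
    then have ij: "i < N" "j < N" and ijN: "i < N \<and> j < N"
      using assms(2) by auto
    have entry: "(\<lambda>Y. Q Y i j) \<in> hom_poly n c"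
      using Q(1) True by (simp add: hom_poly_map_def)
    have "truncate_map n (extend_equiv_map n N c Q) X i j
        = incl_excl N (2 * c) (\<lambda>U. Q (mat_restrict (U \<union> {i, j}) (mat_restrict {..<n} X)) i j)"
      unfolding truncate_map_def extend_equiv_map_def relabelled_entry_def if_P[OF True] if_P[OF ijN]
    proof (rule incl_excl_cong)
      fix U assume U: "U \<in> small_subsets N (2 * c)"
      let ?W = "U \<union> {i, j}"
      let ?h = "relabel n N ?W"
      have "Q (act ?h (mat_restrict (?W \<inter> {..<n}) X)) (?h i) (?h j)
          = Q (act id (mat_restrict (?W \<inter> {..<n}) X)) (id i) (id j)"
        using relabel_pair_permutes[OF U ij assms(1,2)] relabel_pair_image[OF U ij assms(1,2)] True
        by (intro equivariant_act_mat_restrict_transfer[OF Q(2)]) (auto simp: permutes_bij)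
      then show "Q (act ?h (mat_restrict ?W (mat_restrict {..<n} X))) (?h i) (?h j)
          = Q (mat_restrict ?W (mat_restrict {..<n} X)) i j"
        by (simp add: mat_restrict_mat_restrict act_id)
    qed
    also have "\<dots> = Q (mat_restrict {..<n} X) i j"
      by (rule hom_poly_eq_incl_excl[OF subsetD[OF hom_poly_mono[OF assms(2)] entry], symmetric])
    also have "\<dots> = Q X i j"
      using hom_poly_mat_restrict_self[OF entry] .
    finally show ?thesis .
  qed
qed

lemma extend_truncate_equiv_map:
  assumes "2 * c + 2 \<le> n" "n \<le> N" "P \<in> equiv_maps N c"
  shows "extend_equiv_map n N c (truncate_map n P) = P"
proof (intro ext)
  fix X i j
  have P: "P \<in> hom_poly_map N c" "equivariant N P"
    using assms(3) by (auto simp: equiv_maps_def)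
  show "extend_equiv_map n N c (truncate_map n P) X i j = P X i j"
  proof (cases "i < N \<and> j < N")
    case False
    then show ?thesis
      using P(1) by (auto simp: extend_equiv_map_def hom_poly_map_def)
  next
    case True
    have entry: "(\<lambda>Y. P Y i j) \<in> hom_poly N c"
      using P(1) True by (simp add: hom_poly_map_def)
    have "extend_equiv_map n N c (truncate_map n P) X i j
        = incl_excl N (2 * c) (\<lambda>U. P (mat_restrict (U \<union> {i, j}) X) i j)"
      unfolding extend_equiv_map_def relabelled_entry_def if_P[OF True]
    proof (rule incl_excl_cong)
      fix U assume U: "U \<in> small_subsets N (2 * c)"
      let ?W = "U \<union> {i, j}"
      let ?h = "relabel n N ?W"
      have h: "?h permutes {..<N}" "?h ` ?W \<subseteq> {..<n}"
        using relabel_pair_permutes[OF U _ _ assms(1,2)] relabel_pair_image[OF U _ _ assms(1,2)] True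
        by auto
      have "truncate_map n P (act ?h (mat_restrict ?W X)) (?h i) (?h j)
          = P (act ?h (mat_restrict ?W X)) (?h i) (?h j)"
        by (rule truncate_map_act_mat_restrict[OF permutes_bij[OF h(1)] h(2)]) auto
      also have "\<dots> = act ?h (P (mat_restrict ?W X)) (?h i) (?h j)"
        using P(2) h(1) unfolding equivariant_def by simp
      also have "\<dots> = P (mat_restrict ?W X) i j"
        by (simp only: act_def permutes_inverses(2)[OF h(1)])
      finally show "truncate_map n P (act ?h (mat_restrict ?W X)) (?h i) (?h j) = P (mat_restrict ?W X) i j" .
    qed
    also have "\<dots> = P X i j"
      by (rule hom_poly_eq_incl_excl[OF entry, symmetric])
    finally show ?thesis .
  qed
qed

theorem equiv_dim_eq:
  assumes "2 * c + 2 \<le> n" "n \<le> N"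
  shows "equiv_dim n c = equiv_dim N c"
proof -
  interpret truncation: Vector_Spaces.linear mscale mscale "truncate_map n"
    by (rule truncate_map_linear)
  show ?thesis
    unfolding equiv_dim_def equiv_maps_def[symmetric]
    by (rule truncation.dim_eq_if_inverse_on[where g = "extend_equiv_map n N c",
        OF equiv_maps_subspace image_subsetI image_subsetI])
      (simp_all add: truncate_map_in_equiv_maps[OF assms(2)] extend_equiv_map_in_equiv_maps[OF assms]
         extend_truncate_equiv_map[OF assms] truncate_extend_equiv_map[OF assms])
qed

theorem mainTheorem10:
  fixes n N :: nat
  assumes "n \<ge> 1" and "N \<ge> n"
  shows "(\<forall>c. c \<le> n div 2 \<longrightarrow> inv_dim n c = inv_dim N c)
       \<and> (\<forall>c. int c \<le> int (n div 2) - 1 \<longrightarrow> equiv_dim n c = equiv_dim N c)"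
proof (intro conjI allI impI)
  fix c assume "c \<le> n div 2"
  then show "inv_dim n c = inv_dim N c"
    using inv_dim_eq assms(2) by simp
next
  fix c assume "int c \<le> int (n div 2) - 1"
  then show "equiv_dim n c = equiv_dim N c"
    using equiv_dim_eq assms(2) by simp
qed

end
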